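(* Let $\xi,\eta\in\mathrm{SL}(2,\mathbb{R})$ with $\gamma:=\xi\eta\xi^{-1}\eta^{-1}$ elliptic, let $p\in\mathbf{H}^2$ be the fixed point of $\gamma$, and set $p_4=p$, $p_3=\eta^{-1}p$, $p_2=\xi^{-1}\eta^{-1}p$, $p_1=\eta\xi^{-1}\eta^{-1}p$. Then the four points $p_1,p_2,p_3,p_4$ do not all lie on a single geodesic of $\mathbf{H}^2$.
   Context: $\mathrm{SL}(2,\mathbb{R})$ acts on the hyperbolic plane $\mathbf{H}^2$ by isometries via Möbius transformations; an element is elliptic if it fixes exactly one point of $\mathbf{H}^2$ (equivalently $|\mathrm{tr}|<2$). *)

theory Defs
  imports "HOL-Analysis.Analysis"
begin

definition SL2 :: "(real^2^2) set" where
  "SL2 = {A. det A = 1}"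

definition H2 :: "complex set" where
  "H2 = {z. Im z > 0}"

definition mobius :: "real^2^2 \<Rightarrow> complex \<Rightarrow> complex" where
  "mobius A z = (complex_of_real (A$1$1) * z + complex_of_real (A$1$2)) /
                (complex_of_real (A$2$1) * z + complex_of_real (A$2$2))"

definition elliptic :: "real^2^2 \<Rightarrow> bool" where
  "elliptic A \<longleftrightarrow> (\<exists>!z. z \<in> H2 \<and> mobius A z = z)"

definition geodesic :: "complex set \<Rightarrow> bool" where
  "geodesic G \<longleftrightarrow>
     (\<exists>c::real. G = {z \<in> H2. Re z = c}) \<or>
     (\<exists>c r::real. r > 0 \<and> G = {z \<in> H2. cmod (z - complex_of_real c) = r})"

end

theory Submission
  imports Defs
begin

text \<open>
  Put \<gamma> = \<xi> \<eta> \<xi>^-1 \<eta>^-1. Since \<gamma> fixes p, \<xi> maps p1, p2 to p4, p3 and \<eta> maps p2, p3 to p1, p4.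
  Write a geodesic G as the zero set in H2 of the Hermitian form of a real symmetric
  matrix Q with det Q < 0. If all four points lie on G and p1 \<noteq> p2, p2 \<noteq> p3, then \<xi> and \<eta>
  map two distinct points of G into G, so they preserve G and pull Q back to \<plusminus>Q
  (the sign says whether the two sides of G are swapped). The signs cancel in the
  commutator, so \<gamma> preserves Q; but an element of SL(2,R) preserving an indefinite form
  has |tr| \<ge> 2, so \<gamma> is not elliptic. If p1 = p2 or p2 = p3, then \<xi> or \<eta> fixes two points
  of H2 (so it is \<plusminus>1), or \<xi> and \<eta> have a common fixed point; either way they commute
  and \<gamma> = 1.
\<close>

lemma matrix_mult_2_nth: "((A::'a::comm_semiring_1^2^2) ** B)$i$j = A$i$1 * B$1$j + A$i$2 * B$2$j"
  by (simp add: matrix_matrix_mult_def sum_2)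

lemma matrix_2_eq_iff:
  "(A::'a^2^2) = B \<longleftrightarrow> A$1$1 = B$1$1 \<and> A$1$2 = B$1$2 \<and> A$2$1 = B$2$1 \<and> A$2$2 = B$2$2"
  by (auto simp: vec_eq_iff forall_2)

lemma mat_2_nth [simp]:
  "(mat x :: 'a::zero^2^2)$1$1 = x" "(mat x :: 'a^2^2)$1$2 = 0"
  "(mat x :: 'a::zero^2^2)$2$1 = 0" "(mat x :: 'a^2^2)$2$2 = x"
  by (simp_all add: mat_def)

lemma trace_2: "trace (A::'a::semiring_1^2^2) = A$1$1 + A$2$2"
  by (simp add: trace_def sum_2)

definition mat2 :: "'a \<Rightarrow> 'a \<Rightarrow> 'a \<Rightarrow> 'a \<Rightarrow> 'a^2^2" where
  "mat2 a b c d = (\<chi> i j. if i = 1 then (if j = 1 then a else b) else (if j = 1 then c else d))"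

lemma mat2_nth [simp]:
  "mat2 a b c d $1$1 = a" "mat2 a b c d $1$2 = b" "mat2 a b c d $2$1 = c" "mat2 a b c d $2$2 = d"
  by (simp_all add: mat2_def)

lemma SL2_iff: "A \<in> SL2 \<longleftrightarrow> A$1$1 * A$2$2 - A$1$2 * A$2$1 = 1"
  by (simp add: SL2_def det_2)

lemma matrix_inv_SL2:
  assumes "A \<in> SL2"
  shows "matrix_inv A = mat2 (A$2$2) (- A$1$2) (- A$2$1) (A$1$1)" (is "_ = ?adj")
proof -
  have adj: "A ** ?adj = mat 1 \<and> ?adj ** A = mat 1"
    using assms by (simp add: SL2_iff matrix_2_eq_iff matrix_mult_2_nth algebra_simps)
  then have inv: "A ** matrix_inv A = mat 1 \<and> matrix_inv A ** A = mat 1"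
    unfolding matrix_inv_def by (rule someI)
  have "matrix_inv A = (matrix_inv A ** A) ** ?adj"
    using adj by (simp flip: matrix_mul_assoc)
  then show ?thesis
    using inv by simp
qed

lemma SL2_matrix_inv: "A \<in> SL2 \<Longrightarrow> matrix_inv A \<in> SL2"
  by (simp add: matrix_inv_SL2 SL2_iff algebra_simps)

lemma SL2_mult: "A \<in> SL2 \<Longrightarrow> B \<in> SL2 \<Longrightarrow> A ** B \<in> SL2"
  by (simp add: SL2_def det_mul)

lemma SL2_matrix_inv_right: "A \<in> SL2 \<Longrightarrow> A ** matrix_inv A = mat 1"
  by (simp add: matrix_inv_SL2 SL2_iff matrix_2_eq_iff matrix_mult_2_nth algebra_simps)

abbreviation mobius_denom :: "real^2^2 \<Rightarrow> complex \<Rightarrow> complex" where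
  "mobius_denom A z \<equiv> complex_of_real (A$2$1) * z + complex_of_real (A$2$2)"

lemma mobius_denom_nonzero:
  assumes "A \<in> SL2" "z \<in> H2"
  shows "mobius_denom A z \<noteq> 0"
proof
  assume "mobius_denom A z = 0"
  then have "Re (mobius_denom A z) = 0" "Im (mobius_denom A z) = 0"
    by simp_all
  then have "A$2$1 * Re z + A$2$2 = 0" "A$2$1 * Im z = 0"
    by simp_all
  then show False
    using assms by (auto simp: SL2_iff H2_def)
qed

lemma Im_mobius:
  "Im (mobius A z) = (A$1$1 * A$2$2 - A$1$2 * A$2$1) * Im z / (cmod (mobius_denom A z))\<^sup>2"
  by (simp add: mobius_def Im_divide cmod_power2 algebra_simps)

lemma mobius_H2: "A \<in> SL2 \<Longrightarrow> z \<in> H2 \<Longrightarrow> mobius A z \<in> H2"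
  using mobius_denom_nonzero[of A z] by (simp add: H2_def Im_mobius SL2_iff)

lemma mobius_divide:
  assumes "v \<noteq> 0"
  shows "mobius A (u / v) =
    (complex_of_real (A$1$1) * u + complex_of_real (A$1$2) * v) /
    (complex_of_real (A$2$1) * u + complex_of_real (A$2$2) * v)"
proof -
  let ?a = "complex_of_real (A$1$1)" and ?b = "complex_of_real (A$1$2)"
    and ?c = "complex_of_real (A$2$1)" and ?d = "complex_of_real (A$2$2)"
  have "mobius A (u / v) = ((?a * u + ?b * v) / v) / ((?c * u + ?d * v) / v)"
    using assms by (simp add: mobius_def add_divide_distrib)
  then show ?thesis
    using assms by simp
qed

lemma mobius_mult:
  assumes "B \<in> SL2" "z \<in> H2"
  shows "mobius (A ** B) z = mobius A (mobius B z)"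
  using mobius_divide[OF mobius_denom_nonzero[OF assms], of A "complex_of_real (B$1$1) * z + complex_of_real (B$1$2)"]
  by (simp add: mobius_def matrix_mult_2_nth algebra_simps)

lemma mobius_id [simp]: "mobius (mat 1) z = z"
  by (simp add: mobius_def)

lemma mobius_mobius_matrix_inv: "A \<in> SL2 \<Longrightarrow> z \<in> H2 \<Longrightarrow> mobius A (mobius (matrix_inv A) z) = z"
  by (metis mobius_mult mobius_id SL2_matrix_inv SL2_matrix_inv_right)

text \<open>For symmetric Q, hform Q z is the Hermitian form of Q at the homogeneous vector (z, 1);
  geodesics are the zero sets in H2 of the forms with det Q < 0.\<close>

definition hform :: "real^2^2 \<Rightarrow> complex \<Rightarrow> real" where
  "hform Q z = Q$1$1 * (cmod z)\<^sup>2 + (Q$1$2 + Q$2$1) * Re z + Q$2$2"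

definition form_pullback :: "real^2^2 \<Rightarrow> real^2^2 \<Rightarrow> real^2^2" where
  "form_pullback A Q = transpose A ** Q ** A"

lemma form_pullback_nth:
  "form_pullback A Q $i$j =
     A$1$i * (Q$1$1 * A$1$j + Q$1$2 * A$2$j) + A$2$i * (Q$2$1 * A$1$j + Q$2$2 * A$2$j)"
  by (simp add: form_pullback_def matrix_mult_2_nth transpose_def algebra_simps)

lemma hform_divide:
  assumes "v \<noteq> 0"
  shows "hform Q (u / v) * (cmod v)\<^sup>2 =
    Q$1$1 * (cmod u)\<^sup>2 + (Q$1$2 + Q$2$1) * Re (u * cnj v) + Q$2$2 * (cmod v)\<^sup>2"
proof -
  have norm: "(cmod (u / v))\<^sup>2 * (cmod v)\<^sup>2 = (cmod u)\<^sup>2"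
    using assms by (simp add: norm_divide power_divide)
  have re: "Re (u / v) * (cmod v)\<^sup>2 = Re (u * cnj v)"
    using assms by (simp add: complex_div_cnj[of u v])
  have "hform Q (u / v) * (cmod v)\<^sup>2 = Q$1$1 * ((cmod (u / v))\<^sup>2 * (cmod v)\<^sup>2)
      + (Q$1$2 + Q$2$1) * (Re (u / v) * (cmod v)\<^sup>2) + Q$2$2 * (cmod v)\<^sup>2"
    unfolding hform_def by (simp add: algebra_simps)
  then show ?thesis
    unfolding norm re .
qed

lemma hform_mobius:
  assumes "A \<in> SL2" "z \<in> H2"
  shows "hform Q (mobius A z) * (cmod (mobius_denom A z))\<^sup>2 = hform (form_pullback A Q) z"
proof -
  let ?u = "complex_of_real (A$1$1) * z + complex_of_real (A$1$2)" and ?v = "mobius_denom A z"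
  have "hform Q (mobius A z) * (cmod ?v)\<^sup>2 =
      Q$1$1 * (cmod ?u)\<^sup>2 + (Q$1$2 + Q$2$1) * Re (?u * cnj ?v) + Q$2$2 * (cmod ?v)\<^sup>2"
    unfolding mobius_def by (rule hform_divide[OF mobius_denom_nonzero[OF assms]])
  also have "\<dots> = hform (form_pullback A Q) z"
    unfolding hform_def form_pullback_nth cmod_power2 by (simp add: power2_eq_square algebra_simps)
  finally show ?thesis .
qed

lemma geodesic_hform_zeros:
  assumes "geodesic G"
  obtains Q where "Q$1$2 = Q$2$1" "det Q < 0" "G = {z \<in> H2. hform Q z = 0}"
  using assms unfolding geodesic_def
proof (elim disjE exE conjE)
  fix c assume "G = {z \<in> H2. Re z = c}"
  then show thesis
    by (intro that[of "mat2 0 (1/2) (1/2) (-c)"]) (auto simp: det_2 hform_def)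
next
  fix c r :: real assume r: "r > 0" and G: "G = {z \<in> H2. cmod (z - complex_of_real c) = r}"
  have "cmod (z - complex_of_real c) = r \<longleftrightarrow> hform (mat2 1 (-c) (-c) (c\<^sup>2 - r\<^sup>2)) z = 0" for z
  proof -
    have "cmod (z - complex_of_real c) = r \<longleftrightarrow> (cmod (z - complex_of_real c))\<^sup>2 = r\<^sup>2"
      using r by (simp add: power2_eq_iff_nonneg)
    also have "\<dots> \<longleftrightarrow> hform (mat2 1 (-c) (-c) (c\<^sup>2 - r\<^sup>2)) z = 0"
      unfolding cmod_power2 hform_def by (simp add: power2_eq_square algebra_simps)
    finally show ?thesis .
  qed
  then show thesis
    using r by (intro that[of "mat2 1 (-c) (-c) (c\<^sup>2 - r\<^sup>2)"]) (auto simp: G det_2 power2_eq_square)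
qed

lemma H2_eqI:
  assumes "z \<in> H2" "w \<in> H2" "Re z = Re w" "(cmod z)\<^sup>2 = (cmod w)\<^sup>2"
  shows "z = w"
proof -
  have "(Im z)\<^sup>2 = (Im w)\<^sup>2" "Im z > 0" "Im w > 0"
    using assms by (simp_all add: cmod_power2 H2_def)
  then have "Im z = Im w"
    by (simp add: power2_eq_iff_nonneg)
  then show ?thesis
    using assms(3) by (simp add: complex_eqI)
qed

lemma affine_zeros_proportional:
  fixes a b c a' b' c' x1 x2 y1 y2 :: real
  assumes "a * x1 + b * y1 + c = 0" "a * x2 + b * y2 + c = 0"
    and "a' * x1 + b' * y1 + c' = 0" "a' * x2 + b' * y2 + c' = 0"
    and "(x1, y1) \<noteq> (x2, y2)" "(a, b, c) \<noteq> (0, 0, 0)"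
  shows "\<exists>s. a' = s * a \<and> b' = s * b \<and> c' = s * c"
proof (cases "y1 = y2")
  case True
  then have "x1 \<noteq> x2"
    using assms(5) by auto
  moreover have "a * (x1 - x2) = 0" "a' * (x1 - x2) = 0"
    using assms(1-4) unfolding True right_diff_distrib by linarith+
  ultimately have a: "a = 0" "a' = 0"
    by simp_all
  then have "b \<noteq> 0" "c = - b * y1" "c' = - b' * y1"
    using assms(1,3,6) by (auto simp: algebra_simps)
  then show ?thesis
    using a by (intro exI[of _ "b' / b"]) (simp add: field_simps)
next
  case False
  define k where "k = (x1 - x2) / (y1 - y2)"
  have "a * (x1 - x2) + b * (y1 - y2) = 0" "a' * (x1 - x2) + b' * (y1 - y2) = 0"
    using assms(1-4) by (simp_all add: algebra_simps)
  then have b: "b = - a * k" "b' = - a' * k"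
    using False unfolding k_def by (simp_all add: field_simps)
  then have c: "c = - a * (x1 - k * y1)" "c' = - a' * (x1 - k * y1)"
    using assms(1,3) by (simp_all add: algebra_simps)
  have "a \<noteq> 0"
    using assms(6) b c by auto
  then show ?thesis
    unfolding b c by (intro exI[of _ "a' / a"]) (simp add: field_simps)
qed

lemma hform_zeros_proportional:
  assumes "Q$1$2 = Q$2$1" "Q'$1$2 = Q'$2$1" "Q \<noteq> 0"
    and "z1 \<in> H2" "z2 \<in> H2" "z1 \<noteq> z2"
    and "hform Q z1 = 0" "hform Q z2 = 0" "hform Q' z1 = 0" "hform Q' z2 = 0"
  shows "\<exists>s. Q' = s *\<^sub>R Q"
proof -
  have "(Q$1$1, Q$1$2 + Q$2$1, Q$2$2) \<noteq> (0, 0, 0)"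
    using assms(1,3) by (auto simp: matrix_2_eq_iff)
  moreover have "((cmod z1)\<^sup>2, Re z1) \<noteq> ((cmod z2)\<^sup>2, Re z2)"
    using H2_eqI assms(4-6) by auto
  ultimately obtain s where "Q'$1$1 = s * Q$1$1" "Q'$1$2 + Q'$2$1 = s * (Q$1$2 + Q$2$1)" "Q'$2$2 = s * Q$2$2"
    using affine_zeros_proportional assms(7-10) unfolding hform_def by blast
  then have "Q' = s *\<^sub>R Q"
    using assms(1,2) by (simp add: matrix_2_eq_iff)
  then show ?thesis ..
qed

lemma form_pullback_mult: "form_pullback (A ** B) Q = form_pullback B (form_pullback A Q)"
  by (simp add: form_pullback_def matrix_transpose_mul matrix_mul_assoc)

lemma form_pullback_mat_1 [simp]: "form_pullback (mat 1) Q = Q"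
  by (simp add: form_pullback_def)

lemma form_pullback_scaleR: "form_pullback A (s *\<^sub>R Q) = s *\<^sub>R form_pullback A Q"
  by (simp add: matrix_2_eq_iff form_pullback_nth algebra_simps)

lemma form_pullback_symmetric: "Q$1$2 = Q$2$1 \<Longrightarrow> form_pullback A Q $1$2 = form_pullback A Q $2$1"
  by (simp add: form_pullback_nth algebra_simps)

lemma det_form_pullback: "A \<in> SL2 \<Longrightarrow> det (form_pullback A Q) = det Q"
  by (simp add: form_pullback_def det_mul SL2_def)

lemma form_pullback_sign:
  assumes "A \<in> SL2" "Q$1$2 = Q$2$1" "det Q < 0"
    and "z1 \<in> H2" "z2 \<in> H2" "z1 \<noteq> z2"
    and "hform Q z1 = 0" "hform Q z2 = 0" "hform Q (mobius A z1) = 0" "hform Q (mobius A z2) = 0"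
  obtains s where "s\<^sup>2 = 1" "form_pullback A Q = s *\<^sub>R Q"
proof -
  have "hform (form_pullback A Q) z1 = 0" "hform (form_pullback A Q) z2 = 0"
    using hform_mobius[OF assms(1)] assms(4,5,9,10) by (metis mult_zero_left)+
  moreover have "Q \<noteq> 0"
    using assms(3) by (auto simp: det_2)
  ultimately obtain s where s: "form_pullback A Q = s *\<^sub>R Q"
    using hform_zeros_proportional[OF assms(2) form_pullback_symmetric[OF assms(2)]] assms(4-8)
    by blast
  have "s\<^sup>2 * det Q = det Q"
    using det_form_pullback[OF assms(1), of Q] by (simp add: s det_2 power2_eq_square algebra_simps)
  then have "s\<^sup>2 = 1"
    using assms(3) by simp
  then show thesis
    using s by (rule that)
qed

lemma form_pullback_matrix_inv:
  assumes "A \<in> SL2" "form_pullback A Q = s *\<^sub>R Q" "s\<^sup>2 = 1"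
  shows "form_pullback (matrix_inv A) Q = s *\<^sub>R Q"
proof -
  have "s *\<^sub>R Q = s *\<^sub>R form_pullback (A ** matrix_inv A) Q"
    by (simp add: SL2_matrix_inv_right[OF assms(1)])
  also have "\<dots> = s\<^sup>2 *\<^sub>R form_pullback (matrix_inv A) Q"
    by (simp add: form_pullback_mult assms(2) form_pullback_scaleR power2_eq_square)
  finally show ?thesis
    using assms(3) by simp
qed

lemma form_pullback_commutator:
  assumes "A \<in> SL2" "B \<in> SL2"
    and "form_pullback A Q = s *\<^sub>R Q" "s\<^sup>2 = 1"
    and "form_pullback B Q = t *\<^sub>R Q" "t\<^sup>2 = 1"
  shows "form_pullback (A ** B ** matrix_inv A ** matrix_inv B) Q = Q"
proof -
  have "form_pullback (A ** B ** matrix_inv A ** matrix_inv B) Q = (s\<^sup>2 * t\<^sup>2) *\<^sub>R Q"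
    using form_pullback_matrix_inv[OF assms(1,3,4)] form_pullback_matrix_inv[OF assms(2,5,6)]
    by (simp add: form_pullback_mult form_pullback_scaleR assms(3,5) power2_eq_square ac_simps)
  then show ?thesis
    using assms(4,6) by simp
qed

lemma trace_sq_ge_4_if_preserves_form:
  assumes "A \<in> SL2" "Q$1$2 = Q$2$1" "det Q < 0" "form_pullback A Q = Q"
  shows "4 \<le> (trace A)\<^sup>2"
proof -
  obtain a b c d where A: "A = mat2 a b c d"
    by (metis matrix_2_eq_iff mat2_nth)
  obtain \<alpha> q \<delta> where Q: "Q = mat2 \<alpha> q q \<delta>"
    using assms(2) by (metis matrix_2_eq_iff mat2_nth)
  have "transpose A ** Q = Q ** matrix_inv A"
    using arg_cong[OF assms(4), of "\<lambda>M. M ** matrix_inv A"]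
    by (simp add: form_pullback_def SL2_matrix_inv_right[OF assms(1)] flip: matrix_mul_assoc)
  then have rel: "\<alpha> * (a - d) = - 2 * q * c" "\<alpha> * b = - c * \<delta>" "2 * q * b = \<delta> * (a - d)"
    using assms(1) unfolding matrix_2_eq_iff
    by (simp_all add: A Q matrix_inv_SL2 matrix_mult_2_nth transpose_def algebra_simps)
  have pos: "q\<^sup>2 - \<alpha> * \<delta> > 0"
    using assms(3) by (simp add: Q det_2 power2_eq_square)
  \<comment> \<open>rel says (a - d, b, c) is parallel to (-2q, -\<delta>, \<alpha>); the resulting Lagrange-type
      identity makes the discriminant of A a nonnegative multiple of -det Q\<close>
  have "((a - d)\<^sup>2 + 4 * b * c) * (4 * q\<^sup>2 + \<alpha>\<^sup>2 + \<delta>\<^sup>2) = 4 * ((a - d)\<^sup>2 + b\<^sup>2 + c\<^sup>2) * (q\<^sup>2 - \<alpha> * \<delta>)"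
    using rel by algebra
  also have "\<dots> \<ge> 0"
    using pos by simp
  finally have "0 \<le> ((a - d)\<^sup>2 + 4 * b * c) * (4 * q\<^sup>2 + \<alpha>\<^sup>2 + \<delta>\<^sup>2)" .
  moreover have "4 * q\<^sup>2 + \<alpha>\<^sup>2 + \<delta>\<^sup>2 > 0"
    using pos zero_le_power2[of "\<alpha> + \<delta>"] zero_le_power2[of q] unfolding power2_sum by linarith
  ultimately have "(a - d)\<^sup>2 + 4 * b * c \<ge> 0"
    by (simp add: zero_le_mult_iff)
  moreover have "(trace A)\<^sup>2 = (a - d)\<^sup>2 + 4 * b * c + 4 * (a * d - b * c)"
    by (simp add: A trace_2 power2_eq_square algebra_simps)
  ultimately show ?thesis
    using assms(1) by (simp add: A SL2_iff)
qed

lemma mobius_fixed_point_entries: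
  assumes "A \<in> SL2" "z \<in> H2" "mobius A z = z"
  shows "A$2$2 = A$1$1 - 2 * A$2$1 * Re z" "A$1$2 = - A$2$1 * (cmod z)\<^sup>2"
proof -
  have "complex_of_real (A$1$1) * z + complex_of_real (A$1$2) = z * mobius_denom A z"
    using assms(3) mobius_denom_nonzero[OF assms(1,2)] unfolding mobius_def
    by (simp add: divide_eq_eq ac_simps)
  then have re: "A$1$1 * Re z + A$1$2 = A$2$1 * ((Re z)\<^sup>2 - (Im z)\<^sup>2) + A$2$2 * Re z"
    and im: "A$1$1 * Im z = (2 * A$2$1 * Re z + A$2$2) * Im z"
    by (simp_all add: complex_eq_iff power2_eq_square algebra_simps)
  from im have a: "A$1$1 = 2 * A$2$1 * Re z + A$2$2"
    using assms(2) by (simp add: H2_def)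
  then show "A$2$2 = A$1$1 - 2 * A$2$1 * Re z"
    by simp
  show "A$1$2 = - A$2$1 * (cmod z)\<^sup>2"
    using re unfolding a cmod_power2 by (simp add: power2_eq_square algebra_simps)
qed

lemma mobius_scalar:
  assumes "A \<in> SL2" "A$2$1 = 0" "A$1$2 = 0" "A$2$2 = A$1$1"
  shows "mobius A z = z"
  using assms by (auto simp: mobius_def SL2_iff)

lemma elliptic_trace_sq_less_4:
  assumes "A \<in> SL2" "elliptic A"
  shows "(trace A)\<^sup>2 < 4"
proof -
  obtain z where z: "z \<in> H2" "mobius A z = z" and unique: "\<And>w. w \<in> H2 \<Longrightarrow> mobius A w = w \<Longrightarrow> w = z"
    using assms(2) unfolding elliptic_def by blast
  note fixed = mobius_fixed_point_entries[OF assms(1) z]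
  have "A$2$1 \<noteq> 0"
  proof
    assume "A$2$1 = 0"
    then have "mobius A w = w" for w
      using fixed assms(1) by (intro mobius_scalar) simp_all
    then have "\<i> = z" "2 * \<i> = z"
      using unique by (simp_all add: H2_def)
    then show False
      by simp
  qed
  moreover have "Im z > 0"
    using z(1) by (simp add: H2_def)
  moreover have "(trace A)\<^sup>2 = 4 - 4 * (A$2$1 * Im z)\<^sup>2"
    using assms(1) unfolding SL2_iff trace_2 fixed cmod_power2
    by (simp add: power2_eq_square algebra_simps)
  ultimately show ?thesis
    by simp
qed

lemma commute_if_common_fixed_point:
  assumes "A \<in> SL2" "B \<in> SL2" "z \<in> H2" "mobius A z = z" "mobius B z = z"
  shows "A ** B = B ** A"
  unfolding matrix_2_eq_iff matrix_mult_2_nth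
    mobius_fixed_point_entries[OF assms(1,3,4)] mobius_fixed_point_entries[OF assms(2,3,5)]
  by (simp add: algebra_simps)

lemma commute_if_two_fixed_points:
  assumes "A \<in> SL2" "z \<in> H2" "w \<in> H2" "z \<noteq> w" "mobius A z = z" "mobius A w = w"
  shows "A ** B = B ** A"
proof -
  note fz = mobius_fixed_point_entries[OF assms(1,2,5)]
    and fw = mobius_fixed_point_entries[OF assms(1,3,6)]
  have "A$2$1 = 0 \<or> Re z = Re w" "A$2$1 = 0 \<or> cmod z = cmod w"
    using fz fw by auto
  then have "A$2$1 = 0"
    using H2_eqI[OF assms(2,3)] assms(4) by auto
  then have "A = A$1$1 *\<^sub>R mat 1"
    using fz by (simp add: matrix_2_eq_iff)
  then show ?thesis
    by (metis matrix_mul_lid matrix_mul_rid matrix_scalar_ac scalar_matrix_assoc)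
qed

lemma commutator_eq_mat_1:
  assumes "A \<in> SL2" "B \<in> SL2" "A ** B = B ** A"
  shows "A ** B ** matrix_inv A ** matrix_inv B = mat 1"
  using assms by (simp add: SL2_matrix_inv_right flip: matrix_mul_assoc)

lemma commute_if_orbit_points_coincide:
  assumes "A \<in> SL2" "B \<in> SL2" "p \<in> H2" "p1 \<in> H2" "p2 \<in> H2" "p3 \<in> H2"
    and "mobius A p1 = p" "mobius A p2 = p3" "mobius B p3 = p" "mobius B p2 = p1"
    and "p1 = p2 \<or> p2 = p3"
  shows "A ** B = B ** A"
  using assms(11)
proof
  assume p12: "p1 = p2"
  then have fixed: "mobius B p = p" "mobius B p2 = p2"
    using assms(7-10) by simp_all
  show ?thesis
  proof (cases "p2 = p")
    case True
    then show ?thesis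
      using commute_if_common_fixed_point[OF assms(1-3)] fixed assms(7) p12 by simp
  next
    case False
    then show ?thesis
      using commute_if_two_fixed_points[OF assms(2,3,5)] fixed by metis
  qed
next
  assume p23: "p2 = p3"
  then have fixed: "mobius A p = p" "mobius A p3 = p3"
    using assms(7-10) by simp_all
  show ?thesis
  proof (cases "p3 = p")
    case True
    then show ?thesis
      using commute_if_common_fixed_point[OF assms(1-3)] fixed assms(9) by simp
  next
    case False
    then show ?thesis
      using commute_if_two_fixed_points[OF assms(1,3,6)] fixed by metis
  qed
qed

lemma commutator_trace_sq_ge_4:
  assumes "A \<in> SL2" "B \<in> SL2" "Q$1$2 = Q$2$1" "det Q < 0"
    and "p \<in> H2" "p1 \<in> H2" "p2 \<in> H2" "p3 \<in> H2"
    and "mobius A p1 = p" "mobius A p2 = p3" "mobius B p3 = p" "mobius B p2 = p1"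
    and "hform Q p = 0" "hform Q p1 = 0" "hform Q p2 = 0" "hform Q p3 = 0"
  shows "4 \<le> (trace (A ** B ** matrix_inv A ** matrix_inv B))\<^sup>2"
proof (cases "p1 = p2 \<or> p2 = p3")
  case True
  then have "A ** B ** matrix_inv A ** matrix_inv B = mat 1"
    using commute_if_orbit_points_coincide[OF assms(1,2,5-12)] commutator_eq_mat_1[OF assms(1,2)] by blast
  then show ?thesis
    by (simp add: trace_2)
next
  case False
  obtain s where "s\<^sup>2 = 1" "form_pullback A Q = s *\<^sub>R Q"
    using form_pullback_sign[OF assms(1,3,4,6,7)] False assms(9,10,13-16) by metis
  moreover obtain t where "t\<^sup>2 = 1" "form_pullback B Q = t *\<^sub>R Q"
    using form_pullback_sign[OF assms(2,3,4,7,8)] False assms(11,12,13-16) by metis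
  ultimately show ?thesis
    using trace_sq_ge_4_if_preserves_form[OF _ assms(3,4)] form_pullback_commutator[OF assms(1,2)]
      SL2_mult SL2_matrix_inv assms(1,2) by metis
qed

theorem mainTheorem3:
  fixes \<xi> \<eta> :: "real^2^2" and p :: complex
  assumes "\<xi> \<in> SL2" and "\<eta> \<in> SL2"
    and "elliptic (\<xi> ** \<eta> ** matrix_inv \<xi> ** matrix_inv \<eta>)"
    and "p \<in> H2"
    and "mobius (\<xi> ** \<eta> ** matrix_inv \<xi> ** matrix_inv \<eta>) p = p"
  shows "\<not> (\<exists>G. geodesic G \<and>
            p \<in> G \<and>
            mobius (matrix_inv \<eta>) p \<in> G \<and>
            mobius (matrix_inv \<xi> ** matrix_inv \<eta>) p \<in> G \<and>
            mobius (\<eta> ** matrix_inv \<xi> ** matrix_inv \<eta>) p \<in> G)"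
proof
  define p3 where "p3 = mobius (matrix_inv \<eta>) p"
  define p2 where "p2 = mobius (matrix_inv \<xi>) p3"
  define p1 where "p1 = mobius \<eta> p2"
  note SL2 = assms(1,2) SL2_matrix_inv SL2_mult
  have H2: "p1 \<in> H2" "p2 \<in> H2" "p3 \<in> H2"
    unfolding p1_def p2_def p3_def using SL2 assms(4) by (simp_all add: mobius_H2)
  have orbit: "mobius \<xi> p1 = p" "mobius \<xi> p2 = p3" "mobius \<eta> p3 = p" "mobius \<eta> p2 = p1"
    using assms(5) unfolding p1_def p2_def p3_def
    by (simp_all add: SL2 assms(4) mobius_H2 mobius_mult mobius_mobius_matrix_inv flip: matrix_mul_assoc)
  have "mobius (matrix_inv \<xi> ** matrix_inv \<eta>) p = p2" "mobius (\<eta> ** matrix_inv \<xi> ** matrix_inv \<eta>) p = p1"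
    unfolding p1_def p2_def p3_def by (simp_all add: SL2 assms(4) mobius_H2 mobius_mult flip: matrix_mul_assoc)
  moreover assume "\<exists>G. geodesic G \<and> p \<in> G \<and> mobius (matrix_inv \<eta>) p \<in> G \<and>
      mobius (matrix_inv \<xi> ** matrix_inv \<eta>) p \<in> G \<and> mobius (\<eta> ** matrix_inv \<xi> ** matrix_inv \<eta>) p \<in> G"
  ultimately obtain G where G: "geodesic G" "p \<in> G" "p1 \<in> G" "p2 \<in> G" "p3 \<in> G"
    unfolding p3_def by auto
  obtain Q where "Q$1$2 = Q$2$1" "det Q < 0" "G = {z \<in> H2. hform Q z = 0}"
    using geodesic_hform_zeros[OF G(1)] .
  then have "4 \<le> (trace (\<xi> ** \<eta> ** matrix_inv \<xi> ** matrix_inv \<eta>))\<^sup>2"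
    using commutator_trace_sq_ge_4[OF assms(1,2) _ _ assms(4) H2 orbit] G by blast
  then show False
    using elliptic_trace_sq_less_4[OF _ assms(3)] SL2 by fastforce
qed

end
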